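(* Let $A\in\mathbb{R}^{d\times d}$ be such that $\mathbf{I}_d-A$ is invertible, set $B:=(\mathbf{I}_d-A)^{-1}$, let $\mu_0,\mu_1\in\mathbb{R}^d$, $\sigma_0,\sigma_1>0$, and $D\in\mathbb{R}^{d\times d}$ a diagonal matrix with positive diagonal entries. Consider the structural causal model $\mathbf{X}_s=\mu_s+A\mathbf{X}_s+\epsilon_s$ with $\epsilon_s\sim\mathcal{N}(0,\sigma_s^2D)$, $s\in\{0,1\}$, so that $\mathbf{X}_s\sim\mathcal{N}(B\mu_s,\sigma_s^2BDB^\top)$. For a realization $\mathbf{x}_s$ of $\mathbf{X}_s$, let $\tilde{\mathbf{x}}^{\mathrm{OT}}_s$ be its image under the optimal transport map (for squared Euclidean cost) from the distribution of $\mathbf{X}_s$ to that of $\mathbf{X}_{s'}$, $s'=1-s$; this map has the form $\mathbf{x}\mapsto B\mu_{s'}+\mathbf{W}_s(\mathbf{x}-B\mu_s)$ for a matrix $\mathbf{W}_s\in\mathbb{R}^{d\times d}$. Then $\mathbf{W}_s=\sigma_{s'}\sigma_s^{-1}\mathbf{I}_d$, and consequently $\tilde{\mathbf{x}}^{\mathrm{OT}}_s=\tilde{\mathbf{x}}^{\mathrm{CF}}_s$.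
   Context: The counterfactual of $\mathbf{x}_s$ is obtained by recovering the noise $\epsilon_s=B^{-1}\mathbf{x}_s-\mu_s$, rescaling it to the other group ($\sigma_{s'}^{-1}(B^{-1}\tilde{\mathbf{x}}-\mu_{s'})=\sigma_s^{-1}(B^{-1}\mathbf{x}_s-\mu_s)$), which gives $\tilde{\mathbf{x}}^{\mathrm{CF}}_s=B\mu_{s'}+\sigma_{s'}\sigma_s^{-1}(\mathbf{x}_s-B\mu_s)$. The optimal transport map from $\mathcal{Q}_1$ to $\mathcal{Q}_2$ is the map $\mathbf{T}$ with $\mathbf{T}_{\#}\mathcal{Q}_1=\mathcal{Q}_2$ minimizing $\mathbb{E}_{\mathbf{X}\sim\mathcal{Q}_1}\|\mathbf{X}-\mathbf{T}(\mathbf{X})\|^2$. *)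

theory Defs
  imports "HOL-Probability.Probability"
begin

definition mvn_density :: "real^'n \<Rightarrow> real^'n^'n \<Rightarrow> real^'n \<Rightarrow> real" where
  "mvn_density m S x =
     exp (- ((x - m) \<bullet> (matrix_inv S *v (x - m))) / 2)
     / sqrt ((2 * pi) ^ CARD('n) * det S)"

definition mvn :: "real^'n \<Rightarrow> real^'n^'n \<Rightarrow> (real^'n) measure" where
  "mvn m S = density lborel (\<lambda>x. ennreal (mvn_density m S x))"

definition transport_map :: "('a::euclidean_space) measure \<Rightarrow> 'a measure \<Rightarrow> ('a \<Rightarrow> 'a) \<Rightarrow> bool" where
  "transport_map P Q T \<longleftrightarrow> T \<in> borel_measurable P \<and> distr P borel T = Q"

definition optimal_transport_map :: "('a::euclidean_space) measure \<Rightarrow> 'a measure \<Rightarrow> ('a \<Rightarrow> 'a) \<Rightarrow> bool" where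
  "optimal_transport_map P Q T \<longleftrightarrow> transport_map P Q T \<and>
     (\<forall>S. transport_map P Q S \<longrightarrow>
        (\<integral>\<^sup>+ x. ennreal ((norm (x - T x))\<^sup>2) \<partial>P) \<le> (\<integral>\<^sup>+ x. ennreal ((norm (x - S x))\<^sup>2) \<partial>P))"

text \<open>Distribution of X_s in the linear SCM X_s = mu_s + A X_s + eps_s, eps_s ~ N(0, sigma_s^2 D):
  X_s ~ N(B mu_s, sigma_s^2 B D B^T), with B = (I - A)^{-1}.\<close>
definition scm_law :: "real^'n^'n \<Rightarrow> real^'n^'n \<Rightarrow> real^'n \<Rightarrow> real \<Rightarrow> (real^'n) measure" where
  "scm_law B D mu sg = mvn (B *v mu) (sg\<^sup>2 *\<^sub>R (B ** D ** transpose B))"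

text \<open>Counterfactual of x_s in group s' (noise recovered and rescaled):
  B mu_{s'} + sigma_{s'} sigma_s^{-1} (x_s - B mu_s).\<close>
definition cf_map :: "real^'n^'n \<Rightarrow> real^'n \<Rightarrow> real \<Rightarrow> real^'n \<Rightarrow> real \<Rightarrow> real^'n \<Rightarrow> real^'n" where
  "cf_map B mu_s sigma_s mu_s' sigma_s' x = B *v mu_s' + (sigma_s' / sigma_s) *\<^sub>R (x - B *v mu_s)"

end

theory Submission
  imports Defs
begin

(*
  The scaling map x \<mapsto> m' + c (x - m) pushes N(m, S) forward to N(m', c\<^sup>2 S).  For c > 0 the
  cost splits pointwise as
    |x - y|\<^sup>2 = \<phi>(x) + \<psi>(y) + |c (x - m) - (y - m')|\<^sup>2 / c
  with explicit quadratic potentials \<phi>, \<psi>.  Integrated along any transport map, \<phi> and \<psi>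
  contribute the same constant, so a transport map is optimal iff the last (nonnegative) term
  vanishes almost everywhere, i.e. iff it agrees with the scaling map almost everywhere; for an
  affine map x \<mapsto> m' + W (x - m) continuity turns this into W = c I.  In the structural causal
  model both groups have covariance \<sigma>\<^sub>s\<^sup>2 B D B\<^sup>T, so c = \<sigma>\<^sub>s\<^sub>' / \<sigma>\<^sub>s and the optimal map is the
  counterfactual map.
*)

section \<open>Matrix inverses and determinants\<close>

lemma matrix_inv_right:
  fixes M :: "'a::field^'n^'n"
  assumes "invertible M"
  shows "M ** matrix_inv M = mat 1"
  using someI_ex[OF assms[unfolded invertible_def]] by (simp add: matrix_inv_def)

lemma matrix_inv_left:
  fixes M :: "'a::field^'n^'n"
  assumes "invertible M"
  shows "matrix_inv M ** M = mat 1"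
  using someI_ex[OF assms[unfolded invertible_def]] by (simp add: matrix_inv_def)

lemma matrix_inv_eqI:
  fixes M X :: "'a::field^'n^'n"
  assumes "M ** X = mat 1"
  shows "matrix_inv M = X"
proof -
  have "invertible M"
    using assms matrix_left_right_inverse1 unfolding invertible_def by blast
  have "matrix_inv M = matrix_inv M ** (M ** X)"
    using assms by (simp add: matrix_mul_rid)
  also have "\<dots> = (matrix_inv M ** M) ** X"
    by (simp add: matrix_mul_assoc)
  also have "\<dots> = X"
    using \<open>invertible M\<close> by (simp add: matrix_inv_left matrix_mul_lid)
  finally show ?thesis .
qed

lemma invertible_matrix_inv:
  fixes M :: "'a::field^'n^'n"
  assumes "invertible M"
  shows "invertible (matrix_inv M)"
  using assms matrix_inv_left matrix_inv_right unfolding invertible_def by blast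

lemma matrix_inv_scaleR:
  fixes M :: "real^'n^'n"
  assumes "invertible M" and "c \<noteq> 0"
  shows "matrix_inv (c *\<^sub>R M) = (1 / c) *\<^sub>R matrix_inv M"
  using assms by (intro matrix_inv_eqI)
    (simp add: matrix_scalar_ac scalar_matrix_assoc[symmetric] matrix_inv_right)

lemma det_scaleR:
  fixes M :: "real^'n^'n"
  shows "det (c *\<^sub>R M) = c ^ CARD('n) * det M"
proof -
  have "c *\<^sub>R M = mat c ** M"
    by (simp add: vec_eq_iff matrix_matrix_mult_def mat_def if_distrib if_distribR cong: if_cong)
  then show ?thesis
    by (metis det_matrix_scaleR det_mul matrix_scaleR)
qed

lemma det_diagonal_pos:
  fixes D :: "real^'n^'n"
  assumes "\<forall>i j. i \<noteq> j \<longrightarrow> D $ i $ j = 0" and "\<forall>i. D $ i $ i > 0"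
  shows "det D > 0"
  using assms by (simp add: det_diagonal prod_pos)

lemma det_congruence_pos:
  fixes B D :: "real^'n^'n"
  assumes "invertible B" and "det D > 0"
  shows "det (B ** D ** transpose B) > 0"
proof -
  have "det (B ** D ** transpose B) = (det B)\<^sup>2 * det D"
    by (simp add: det_mul det_transpose power2_eq_square)
  then show ?thesis
    using assms by (simp add: invertible_det_nz)
qed

section \<open>Coercive matrices\<close>

text \<open>Together with \<open>0 < det S\<close>, coercivity of \<open>matrix_inv S\<close> replaces positive definiteness of a
  covariance matrix \<open>S\<close> below.\<close>

definition coercive_matrix :: "real^'n^'n \<Rightarrow> bool" where
  "coercive_matrix M \<longleftrightarrow> (\<exists>a>0. \<forall>u. a * (norm u)\<^sup>2 \<le> u \<bullet> (M *v u))"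

lemma coercive_matrix_scaleR:
  assumes "coercive_matrix M" and "c > 0"
  shows "coercive_matrix (c *\<^sub>R M)"
proof -
  obtain a where "a > 0" and "\<And>u. a * (norm u)\<^sup>2 \<le> u \<bullet> (M *v u)"
    using assms(1) unfolding coercive_matrix_def by blast
  then have "\<forall>u. (c * a) * (norm u)\<^sup>2 \<le> u \<bullet> ((c *\<^sub>R M) *v u)"
    using assms(2) by (simp flip: scaleR_matrix_vector_assoc add: mult.assoc)
  then show ?thesis
    using \<open>a > 0\<close> assms(2) unfolding coercive_matrix_def by (meson mult_pos_pos)
qed

lemma coercive_matrix_diagonal:
  fixes D :: "real^'n^'n"
  assumes "\<forall>i j. i \<noteq> j \<longrightarrow> D $ i $ j = 0" and "\<forall>i. D $ i $ i > 0"
  shows "coercive_matrix D"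
proof -
  define d where "d = Min (range (\<lambda>i. D $ i $ i))"
  have "d \<in> range (\<lambda>i. D $ i $ i)"
    unfolding d_def by (rule Min_in) auto
  then have "d > 0"
    using assms(2) by auto
  have "d * (norm u)\<^sup>2 \<le> u \<bullet> (D *v u)" for u
  proof -
    have Du: "(D *v u) $ i = D $ i $ i * u $ i" for i
    proof -
      have "(D *v u) $ i = (\<Sum>j\<in>UNIV. if j = i then D $ i $ i * u $ i else 0)"
        unfolding matrix_vector_mult_def vec_lambda_beta by (rule sum.cong) (use assms(1) in auto)
      then show ?thesis
        by simp
    qed
    have "d * (norm u)\<^sup>2 = (\<Sum>i\<in>UNIV. d * (u $ i)\<^sup>2)"
      unfolding power2_norm_eq_inner inner_vec_def by (simp add: sum_distrib_left power2_eq_square)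
    also have "\<dots> \<le> (\<Sum>i\<in>UNIV. D $ i $ i * (u $ i)\<^sup>2)"
      unfolding d_def by (intro sum_mono mult_right_mono) auto
    also have "\<dots> = u \<bullet> (D *v u)"
      by (simp add: inner_vec_def Du power2_eq_square ac_simps)
    finally show ?thesis .
  qed
  then show ?thesis
    using \<open>d > 0\<close> unfolding coercive_matrix_def by blast
qed

lemma coercive_matrix_inv_congruence:
  fixes B D :: "real^'n^'n"
  assumes "invertible B" and D: "invertible D" "coercive_matrix D"
  shows "coercive_matrix (matrix_inv (B ** D ** transpose B))"
proof -
  define S where "S = B ** D ** transpose B"
  have "invertible S"
    unfolding S_def using assms by (simp add: invertible_mult transpose_invertible)
  obtain \<delta> where "\<delta> > 0" and \<delta>: "\<And>z. \<delta> * (norm z)\<^sup>2 \<le> z \<bullet> (D *v z)"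
    using D(2) unfolding coercive_matrix_def by blast
  have "linear (\<lambda>z. B *v (D *v z))"
    by (simp add: matrix_vector_mul_assoc matrix_vector_mul_linear)
  then obtain K where "K > 0" and K: "\<And>z. norm (B *v (D *v z)) \<le> K * norm z"
    using linear_bounded_pos by blast
  have "\<delta> / K\<^sup>2 * (norm u)\<^sup>2 \<le> u \<bullet> (matrix_inv S *v u)" for u
  proof -
    \<comment> \<open>write \<open>u = S w\<close>; then \<open>u \<bullet> w\<close> is the \<open>D\<close>-form of \<open>z = B\<^sup>T w\<close>, while \<open>norm u \<le> K * norm z\<close>\<close>
    define w where "w = matrix_inv S *v u"
    define z where "z = transpose B *v w"
    have "B *v (D *v z) = (S ** matrix_inv S) *v u"
      by (simp add: S_def z_def w_def matrix_vector_mul_assoc matrix_mul_assoc)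
    then have u: "u = B *v (D *v z)"
      using matrix_inv_right[OF \<open>invertible S\<close>] by (simp add: matrix_vector_mul_lid)
    have "(norm u)\<^sup>2 \<le> K\<^sup>2 * (norm z)\<^sup>2"
      using K[of z] \<open>K > 0\<close> by (simp flip: u power_mult_distrib add: power_mono)
    then have "\<delta> / K\<^sup>2 * (norm u)\<^sup>2 \<le> \<delta> * (norm z)\<^sup>2"
      using \<open>\<delta> > 0\<close> \<open>K > 0\<close> by (simp add: field_simps)
    also have "\<dots> \<le> z \<bullet> (D *v z)"
      by (rule \<delta>)
    also have "\<dots> = u \<bullet> w"
      by (metis u z_def dot_lmul_matrix inner_commute vector_transpose_matrix)
    finally show ?thesis
      unfolding w_def .
  qed
  then show ?thesis
    using \<open>\<delta> > 0\<close> \<open>K > 0\<close> unfolding coercive_matrix_def S_def by (meson divide_pos_pos zero_less_power)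
qed

lemma nondegenerate_congruence_diagonal:
  fixes B D :: "real^'n^'n"
  assumes "invertible B"
    and "\<forall>i j. i \<noteq> j \<longrightarrow> D $ i $ j = 0" and "\<forall>i. D $ i $ i > 0"
  shows "0 < det (B ** D ** transpose B)" and "coercive_matrix (matrix_inv (B ** D ** transpose B))"
proof -
  have "0 < det D"
    using assms(2,3) by (rule det_diagonal_pos)
  with assms(1) show "0 < det (B ** D ** transpose B)"
    by (rule det_congruence_pos)
  show "coercive_matrix (matrix_inv (B ** D ** transpose B))"
    using assms(1) \<open>0 < det D\<close> coercive_matrix_diagonal[OF assms(2,3)]
    by (simp add: coercive_matrix_inv_congruence invertible_det_nz)
qed

lemma nondegenerate_covariance_scaleR:
  fixes S :: "real^'n^'n"
  assumes "0 < det S" and "coercive_matrix (matrix_inv S)" and "c > 0"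
  shows "0 < det (c *\<^sub>R S)" and "coercive_matrix (matrix_inv (c *\<^sub>R S))"
  using assms by (simp_all add: det_scaleR matrix_inv_scaleR invertible_det_nz coercive_matrix_scaleR)

section \<open>Gaussian integrals and second moments\<close>

lemma nn_integral_exp_neg_square_finite:
  fixes b :: real
  assumes "b > 0"
  shows "(\<integral>\<^sup>+t. ennreal (exp (- b * t\<^sup>2)) \<partial>lborel) < \<infinity>"
proof -
  define \<sigma> where "\<sigma> = sqrt (1 / (2 * b))"
  have "\<sigma> > 0" and \<sigma>2: "\<sigma>\<^sup>2 = 1 / (2 * b)"
    using assms by (auto simp: \<sigma>_def)
  have "exp (- b * t\<^sup>2) = sqrt (2 * pi * \<sigma>\<^sup>2) * normal_density 0 \<sigma> t" for t
    using \<sigma>2 \<open>\<sigma> > 0\<close> assms by (simp add: normal_density_def field_simps)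
  then have "(\<integral>\<^sup>+t. ennreal (exp (- b * t\<^sup>2)) \<partial>lborel)
      = ennreal (sqrt (2 * pi * \<sigma>\<^sup>2)) * (\<integral>\<^sup>+t. ennreal (normal_density 0 \<sigma> t) \<partial>lborel)"
    by (simp add: ennreal_mult nn_integral_cmult)
  also have "(\<integral>\<^sup>+t. ennreal (normal_density 0 \<sigma> t) \<partial>lborel) = 1"
    using integral_normal_density[OF \<open>\<sigma> > 0\<close>]
    by (subst nn_integral_eq_integral) (auto intro: integrable_normal_density[OF \<open>\<sigma> > 0\<close>])
  finally show ?thesis
    by simp
qed

lemma nn_integral_exp_neg_norm_square_finite:
  assumes "b > 0"
  shows "(\<integral>\<^sup>+u. ennreal (exp (- b * (norm (u::'a::euclidean_space))\<^sup>2)) \<partial>lborel) < \<infinity>"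
proof -
  have eq: "ennreal (exp (- b * (norm u)\<^sup>2)) = (\<Prod>j\<in>Basis. ennreal (exp (- b * (u \<bullet> j)\<^sup>2)))" for u :: 'a
  proof -
    have "(norm u)\<^sup>2 = (\<Sum>j\<in>Basis. (u \<bullet> j)\<^sup>2)"
      unfolding power2_norm_eq_inner by (subst euclidean_inner) (simp add: power2_eq_square)
    then show ?thesis
      by (simp add: sum_distrib_left exp_sum[symmetric] sum_negf prod_ennreal)
  qed
  have "(\<integral>\<^sup>+u. ennreal (exp (- b * (norm (u::'a))\<^sup>2)) \<partial>lborel)
      = (\<Prod>j\<in>(Basis::'a set). \<integral>\<^sup>+t. ennreal (exp (- b * t\<^sup>2)) \<partial>lborel)"
    unfolding eq by (rule nn_integral_lborel_prod) auto
  also have "\<dots> < \<infinity>"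
    using nn_integral_exp_neg_square_finite[OF assms] by (simp add: power_less_top_ennreal)
  finally show ?thesis .
qed

lemma nn_integral_gaussian_second_moment_finite:
  assumes "b > 0"
  shows "(\<integral>\<^sup>+u. ennreal ((1 + (norm (u::'a::euclidean_space))\<^sup>2) * exp (- b * (norm u)\<^sup>2)) \<partial>lborel) < \<infinity>"
proof -
  have bound: "(1 + t) * exp (- b * t) \<le> (1 + 2 / b) * exp (- (b / 2) * t)" if "t \<ge> 0" for t
  proof -
    have "1 + t \<le> (1 + 2 / b) * (1 + b * t / 2)"
      using assms that by (simp add: field_simps)
    also have "\<dots> \<le> (1 + 2 / b) * exp (b * t / 2)"
      using assms exp_ge_add_one_self[of "b * t / 2"] by (intro mult_left_mono) auto
    finally have "(1 + t) * exp (- b * t) \<le> (1 + 2 / b) * exp (b * t / 2) * exp (- b * t)"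
      by (intro mult_right_mono) auto
    also have "\<dots> = (1 + 2 / b) * exp (- (b / 2) * t)"
      by (simp add: mult.assoc flip: exp_add)
    finally show ?thesis .
  qed
  have "(\<integral>\<^sup>+u. ennreal ((1 + (norm (u::'a))\<^sup>2) * exp (- b * (norm u)\<^sup>2)) \<partial>lborel)
      \<le> (\<integral>\<^sup>+u. ennreal ((1 + 2 / b) * exp (- (b / 2) * (norm (u::'a))\<^sup>2)) \<partial>lborel)"
    using bound by (intro nn_integral_mono ennreal_leI) simp
  also have "\<dots> = ennreal (1 + 2 / b) * (\<integral>\<^sup>+u. ennreal (exp (- (b / 2) * (norm (u::'a))\<^sup>2)) \<partial>lborel)"
    using assms by (subst ennreal_mult) (auto intro: nn_integral_cmult)
  also have "\<dots> < \<infinity>"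
    using nn_integral_exp_neg_norm_square_finite[of "b / 2", where 'a='a] assms
    by (simp add: ennreal_mult_less_top)
  finally show ?thesis .
qed

lemma one_plus_norm_diff_square_le:
  fixes x a :: "'a::real_normed_vector"
  shows "1 + (norm (x - a))\<^sup>2 \<le> 2 * (1 + (norm a)\<^sup>2) * (1 + (norm x)\<^sup>2)"
proof -
  have "norm (x - a) \<le> norm x + norm a"
    by (rule norm_triangle_ineq4)
  then have "(norm (x - a))\<^sup>2 \<le> 2 * (norm x)\<^sup>2 + 2 * (norm a)\<^sup>2"
    by (smt (verit) power_mono norm_ge_zero sum_squares_bound power2_sum)
  moreover have "0 \<le> (norm a)\<^sup>2 * (norm x)\<^sup>2"
    by simp
  ultimately show ?thesis
    by (simp only: ring_distribs)
qed

lemma integrable_quadratic: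
  fixes M :: "'a::euclidean_space measure"
  assumes sets_M: "sets M = sets borel" and moment: "(\<integral>\<^sup>+x. ennreal (1 + (norm x)\<^sup>2) \<partial>M) < \<infinity>"
  shows "integrable M (\<lambda>x. \<alpha> + d \<bullet> (x - a) + \<beta> * (norm (x - a))\<^sup>2)"
proof -
  define K where "K = (\<bar>\<alpha>\<bar> + norm d + \<bar>\<beta>\<bar>) * (2 * (1 + (norm a)\<^sup>2))"
  have growth: "norm (\<alpha> + d \<bullet> (x - a) + \<beta> * (norm (x - a))\<^sup>2) \<le> K * (1 + (norm x)\<^sup>2)" for x
  proof -
    define t where "t = norm (x - a)"
    have "\<bar>\<beta> * t\<^sup>2\<bar> = \<bar>\<beta>\<bar> * t\<^sup>2"
      by (simp add: abs_mult)
    then have "norm (\<alpha> + d \<bullet> (x - a) + \<beta> * t\<^sup>2) \<le> \<bar>\<alpha>\<bar> + norm d * t + \<bar>\<beta>\<bar> * t\<^sup>2"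
      using Cauchy_Schwarz_ineq2[of d "x - a"] unfolding t_def real_norm_def by arith
    also have "\<dots> \<le> (\<bar>\<alpha>\<bar> + norm d + \<bar>\<beta>\<bar>) * (1 + t\<^sup>2)"
    proof -
      have "0 \<le> t"
        by (simp add: t_def)
      then have "t \<le> 1 + t\<^sup>2"
        using zero_le_power2[of "t - 1"] unfolding power2_diff by simp
      then have "norm d * t \<le> norm d * (1 + t\<^sup>2)"
        by (rule mult_left_mono) simp
      moreover have "0 \<le> \<bar>\<alpha>\<bar> * t\<^sup>2" and "0 \<le> \<bar>\<beta>\<bar>"
        by simp_all
      ultimately show ?thesis
        unfolding ring_distribs by linarith
    qed
    also have "\<dots> \<le> (\<bar>\<alpha>\<bar> + norm d + \<bar>\<beta>\<bar>) * (2 * (1 + (norm a)\<^sup>2) * (1 + (norm x)\<^sup>2))"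
      unfolding t_def by (intro mult_left_mono one_plus_norm_diff_square_le) auto
    finally show ?thesis
      by (simp only: K_def t_def mult.assoc)
  qed
  have "K \<ge> 0"
    by (simp add: K_def)
  have "(\<integral>\<^sup>+x. ennreal (norm (\<alpha> + d \<bullet> (x - a) + \<beta> * (norm (x - a))\<^sup>2)) \<partial>M)
      \<le> (\<integral>\<^sup>+x. ennreal K * ennreal (1 + (norm x)\<^sup>2) \<partial>M)"
    using growth \<open>K \<ge> 0\<close> by (intro nn_integral_mono) (metis ennreal_leI ennreal_mult')
  also have "\<dots> = ennreal K * (\<integral>\<^sup>+x. ennreal (1 + (norm x)\<^sup>2) \<partial>M)"
    using sets_M by (intro nn_integral_cmult) (simp cong: measurable_cong_sets)
  also have "\<dots> < \<infinity>"
    using moment by (simp add: ennreal_mult_less_top)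
  finally show ?thesis
    using sets_M by (simp add: integrable_iff_bounded cong: measurable_cong_sets)
qed

section \<open>Multivariate normal distributions\<close>

lemma sets_mvn [simp, measurable_cong]: "sets (mvn m S) = sets borel"
  by (simp add: mvn_def)

lemma space_mvn [simp]: "space (mvn m S) = UNIV"
  by (simp add: mvn_def)

lemma borel_measurable_mvn_density [measurable]: "mvn_density m S \<in> borel_measurable borel"
proof -
  have "continuous_on UNIV (\<lambda>x. matrix_inv S *v (x - m))"
    by (simp add: matrix_vector_mult_diff_distrib continuous_intros)
  then have "continuous_on UNIV (mvn_density m S)"
    unfolding mvn_density_def divide_inverse by (intro continuous_intros)
  then show ?thesis
    by (rule borel_measurable_continuous_onI)
qed

lemma mvn_density_pos: "det S > 0 \<Longrightarrow> mvn_density m S x > 0"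
  by (simp add: mvn_density_def)

lemma mvn_density_gaussian_bound:
  fixes S :: "real^'n^'n"
  assumes "det S > 0" and "coercive_matrix (matrix_inv S)"
  obtains a C where "a > 0" and "\<And>x. mvn_density m S x \<le> C * exp (- a * (norm (x - m))\<^sup>2)"
proof -
  obtain a where "a > 0" and a: "\<And>u. a * (norm u)\<^sup>2 \<le> u \<bullet> (matrix_inv S *v u)"
    using assms(2) unfolding coercive_matrix_def by blast
  define C where "C = 1 / sqrt ((2 * pi) ^ CARD('n) * det S)"
  have bound: "mvn_density m S x \<le> C * exp (- (a / 2) * (norm (x - m))\<^sup>2)" for x
    using a[of "x - m"] assms(1) unfolding mvn_density_def C_def
    by (simp add: divide_right_mono)
  show ?thesis
    by (rule that[of "a / 2" C]) (use \<open>a > 0\<close> bound in auto)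
qed

lemma mvn_second_moment_finite:
  fixes S :: "real^'n^'n"
  assumes "det S > 0" and "coercive_matrix (matrix_inv S)"
  shows "(\<integral>\<^sup>+x. ennreal (1 + (norm x)\<^sup>2) \<partial>mvn m S) < \<infinity>"
proof -
  obtain a C where "a > 0" and bound: "\<And>x. mvn_density m S x \<le> C * exp (- a * (norm (x - m))\<^sup>2)"
    using mvn_density_gaussian_bound[OF assms] by blast
  define g where "g u = (1 + (norm u)\<^sup>2) * exp (- a * (norm u)\<^sup>2)" for u :: "real^'n"
  define K where "K = 2 * (1 + (norm m)\<^sup>2) * C"
  have "0 < mvn_density m S m"
    using assms(1) by (rule mvn_density_pos)
  also have "\<dots> \<le> C"
    using bound[of m] by simp
  finally have "K > 0"
    unfolding K_def by (intro mult_pos_pos) (auto intro: add_pos_nonneg)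
  have "1 + (norm x)\<^sup>2 \<le> 2 * (1 + (norm m)\<^sup>2) * (1 + (norm (x - m))\<^sup>2)" for x :: "real^'n"
    using one_plus_norm_diff_square_le[of "x - m" "- m"] by simp
  then have "(1 + (norm x)\<^sup>2) * mvn_density m S x
      \<le> (2 * (1 + (norm m)\<^sup>2) * (1 + (norm (x - m))\<^sup>2)) * (C * exp (- a * (norm (x - m))\<^sup>2))" for x
    using bound[of x] mvn_density_pos[OF assms(1), of m x] by (intro mult_mono) auto
  then have "(1 + (norm x)\<^sup>2) * mvn_density m S x \<le> K * g (x - m)" for x
    by (simp add: K_def g_def ac_simps)
  then have pointwise: "ennreal (mvn_density m S x) * ennreal (1 + (norm x)\<^sup>2) \<le> ennreal (K * g (x - m))" for x
    using mvn_density_pos[OF assms(1), of m x]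
    by (metis ennreal_leI ennreal_mult' less_imp_le mult.commute)
  have "(\<integral>\<^sup>+x. ennreal (1 + (norm x)\<^sup>2) \<partial>mvn m S)
      = (\<integral>\<^sup>+x. ennreal (mvn_density m S x) * ennreal (1 + (norm x)\<^sup>2) \<partial>lborel)"
    unfolding mvn_def by (subst nn_integral_density) auto
  also have "\<dots> \<le> (\<integral>\<^sup>+x. ennreal (K * g (x - m)) \<partial>lborel)"
    by (intro nn_integral_mono pointwise)
  also have "\<dots> = (\<integral>\<^sup>+u. ennreal (K * g u) \<partial>lborel)"
    using nn_integral_distr[of "(+) (- m)" lborel borel "\<lambda>u. ennreal (K * g u)"]
    by (simp add: lborel_distr_plus g_def)
  also have "\<dots> = ennreal K * (\<integral>\<^sup>+u. ennreal (g u) \<partial>lborel)"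
    using \<open>K > 0\<close> unfolding g_def by (subst ennreal_mult) (auto intro: nn_integral_cmult)
  also have "\<dots> < \<infinity>"
    using nn_integral_gaussian_second_moment_finite[OF \<open>a > 0\<close>, where 'a="real^'n"]
    unfolding g_def by (simp add: ennreal_mult_less_top)
  finally show ?thesis .
qed

lemma mvn_density_scaleR_affine:
  fixes S :: "real^'n^'n"
  assumes "invertible S" and "c > 0"
  shows "c ^ CARD('n) * mvn_density m' (c\<^sup>2 *\<^sub>R S) (m' + c *\<^sub>R (x - m)) = mvn_density m S x"
proof -
  have inv: "matrix_inv (c\<^sup>2 *\<^sub>R S) = (1 / c\<^sup>2) *\<^sub>R matrix_inv S"
    using assms by (intro matrix_inv_scaleR) auto
  have "sqrt ((2 * pi) ^ CARD('n) * det (c\<^sup>2 *\<^sub>R S))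
      = sqrt ((c ^ CARD('n))\<^sup>2) * sqrt ((2 * pi) ^ CARD('n) * det S)"
    by (simp add: det_scaleR real_sqrt_mult ac_simps flip: power_mult)
  also have "\<dots> = c ^ CARD('n) * sqrt ((2 * pi) ^ CARD('n) * det S)"
    using assms(2) by simp
  finally have sq: "sqrt ((2 * pi) ^ CARD('n) * det (c\<^sup>2 *\<^sub>R S)) = \<dots>" .
  have "(c *\<^sub>R u) \<bullet> (((1 / c\<^sup>2) *\<^sub>R matrix_inv S) *v (c *\<^sub>R u)) = u \<bullet> (matrix_inv S *v u)" for u
    using assms(2) by (simp flip: scaleR_matrix_vector_assoc add: matrix_vector_mult_scaleR power2_eq_square)
  then show ?thesis
    using assms(2) unfolding mvn_density_def inv sq by simp
qed

lemma distr_mvn_scaling: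
  fixes S :: "real^'n^'n"
  assumes "invertible S" and "c > 0"
  shows "distr (mvn m S) borel (\<lambda>x. m' + c *\<^sub>R (x - m)) = mvn m' (c\<^sup>2 *\<^sub>R S)"
proof -
  define T where "T x = (m' - c *\<^sub>R m) + c *\<^sub>R x" for x :: "real^'n"
  have T_eq: "(\<lambda>x. m' + c *\<^sub>R (x - m)) = T"
    by (auto simp: T_def algebra_simps)
  have [measurable]: "T \<in> borel_measurable borel"
    unfolding T_def by measurable
  have "mvn m' (c\<^sup>2 *\<^sub>R S)
      = density (density (distr lborel borel T) (\<lambda>_. ennreal (c ^ CARD('n))))
          (\<lambda>y. ennreal (mvn_density m' (c\<^sup>2 *\<^sub>R S) y))"
    unfolding mvn_def T_def using lborel_affine[of c "m' - c *\<^sub>R m"] assms(2) by simp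
  also have "\<dots> = density (distr lborel borel T)
      (\<lambda>y. ennreal (c ^ CARD('n)) * ennreal (mvn_density m' (c\<^sup>2 *\<^sub>R S) y))"
    by (simp add: density_density_eq)
  also have "\<dots> = distr (density lborel
      (\<lambda>x. ennreal (c ^ CARD('n)) * ennreal (mvn_density m' (c\<^sup>2 *\<^sub>R S) (T x)))) borel T"
    by (simp add: density_distr)
  also have "\<dots> = distr (mvn m S) borel T"
  proof -
    have "ennreal (c ^ CARD('n)) * ennreal (mvn_density m' (c\<^sup>2 *\<^sub>R S) (T x)) = ennreal (mvn_density m S x)" for x
      using mvn_density_scaleR_affine[OF assms, where m'=m' and m=m and x=x] assms(2)
      unfolding T_eq[symmetric] by (metis ennreal_mult' less_imp_le zero_less_power)
    then show ?thesis
      by (simp add: mvn_def)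
  qed
  finally show ?thesis
    unfolding T_eq ..
qed

lemma transport_map_mvn_scaling:
  fixes S :: "real^'n^'n"
  assumes "invertible S" and "c > 0"
  shows "transport_map (mvn m S) (mvn m' (c\<^sup>2 *\<^sub>R S)) (\<lambda>x. m' + c *\<^sub>R (x - m))"
proof -
  have "(\<lambda>x. m' + c *\<^sub>R (x - m)) \<in> borel_measurable (mvn m S)"
    by measurable
  with distr_mvn_scaling[OF assms] show ?thesis
    unfolding transport_map_def by simp
qed

section \<open>Optimal transport certificates\<close>

lemma transport_cost_split:
  fixes P Q :: "'a::euclidean_space measure"
  assumes sets_P: "sets P = sets borel" and T: "transport_map P Q T"
    and cost: "\<And>x y. (norm (x - y))\<^sup>2 = \<phi> x + \<psi> y + R x y"
    and \<phi>: "integrable P \<phi>" and \<psi>: "integrable Q \<psi>"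
    and P2: "integrable P (\<lambda>x. (norm x)\<^sup>2)" and Q2: "integrable Q (\<lambda>y. (norm y)\<^sup>2)"
  shows "integrable P (\<lambda>x. R x (T x))"
    and "(\<integral>\<^sup>+x. ennreal ((norm (x - T x))\<^sup>2) \<partial>P)
      = ennreal ((\<integral>x. \<phi> x \<partial>P) + (\<integral>y. \<psi> y \<partial>Q) + (\<integral>x. R x (T x) \<partial>P))"
    and "0 \<le> (\<integral>x. \<phi> x \<partial>P) + (\<integral>y. \<psi> y \<partial>Q) + (\<integral>x. R x (T x) \<partial>P)"
proof -
  have [measurable]: "T \<in> borel_measurable P" and Q: "Q = distr P borel T"
    using T unfolding transport_map_def by auto
  note sets_P [measurable_cong]
  have [measurable]: "\<psi> \<in> borel_measurable borel"
    using borel_measurable_integrable[OF \<psi>] by (simp add: Q)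
  have \<psi>T: "integrable P (\<lambda>x. \<psi> (T x))"
    using \<psi> unfolding Q by (simp add: integrable_distr_eq)
  have "integrable P (\<lambda>x. (norm (T x))\<^sup>2)"
    using Q2 unfolding Q by (simp add: integrable_distr_eq)
  then have "integrable P (\<lambda>x. 2 * (norm x)\<^sup>2 + 2 * (norm (T x))\<^sup>2)"
    using P2 by auto
  then have F: "integrable P (\<lambda>x. (norm (x - T x))\<^sup>2)"
  proof (rule Bochner_Integration.integrable_bound)
    show "(\<lambda>x. (norm (x - T x))\<^sup>2) \<in> borel_measurable P"
      by measurable
    have "(norm (x - T x))\<^sup>2 \<le> 2 * (norm x)\<^sup>2 + 2 * (norm (T x))\<^sup>2" for x
      using norm_triangle_ineq4[of x "T x"]
      by (smt (verit) power_mono norm_ge_zero sum_squares_bound power2_sum)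
    then show "AE x in P. norm ((norm (x - T x))\<^sup>2) \<le> norm (2 * (norm x)\<^sup>2 + 2 * (norm (T x))\<^sup>2)"
      by simp
  qed
  have R_eq: "(\<lambda>x. R x (T x)) = (\<lambda>x. (norm (x - T x))\<^sup>2 - \<phi> x - \<psi> (T x))"
    using cost by (auto simp: algebra_simps)
  show R: "integrable P (\<lambda>x. R x (T x))"
    unfolding R_eq using F \<phi> \<psi>T by auto
  have "(\<integral>x. (norm (x - T x))\<^sup>2 \<partial>P) = (\<integral>x. \<phi> x + \<psi> (T x) + R x (T x) \<partial>P)"
    using cost by simp
  also have "\<dots> = (\<integral>x. \<phi> x \<partial>P) + (\<integral>y. \<psi> y \<partial>Q) + (\<integral>x. R x (T x) \<partial>P)"
    using \<phi> \<psi>T R by (simp add: Q integral_distr)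
  finally have int_eq: "(\<integral>x. (norm (x - T x))\<^sup>2 \<partial>P) = \<dots>" .
  show "(\<integral>\<^sup>+x. ennreal ((norm (x - T x))\<^sup>2) \<partial>P) = ennreal ((\<integral>x. \<phi> x \<partial>P) + (\<integral>y. \<psi> y \<partial>Q) + (\<integral>x. R x (T x) \<partial>P))"
    using F by (simp add: nn_integral_eq_integral flip: int_eq)
  show "0 \<le> (\<integral>x. \<phi> x \<partial>P) + (\<integral>y. \<psi> y \<partial>Q) + (\<integral>x. R x (T x) \<partial>P)"
    unfolding int_eq[symmetric] by simp
qed

lemma optimal_transport_map_iff_AE_slack_zero:
  fixes P Q :: "'a::euclidean_space measure"
  assumes sets_P: "sets P = sets borel"
    and T\<^sub>0: "transport_map P Q T\<^sub>0" and slack_T\<^sub>0: "\<And>x. R x (T\<^sub>0 x) = 0"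
    and cost: "\<And>x y. (norm (x - y))\<^sup>2 = \<phi> x + \<psi> y + R x y"
    and slack_nonneg: "\<And>x y. 0 \<le> R x y"
    and \<phi>: "integrable P \<phi>" and \<psi>: "integrable Q \<psi>"
    and P2: "integrable P (\<lambda>x. (norm x)\<^sup>2)" and Q2: "integrable Q (\<lambda>y. (norm y)\<^sup>2)"
  shows "optimal_transport_map P Q T \<longleftrightarrow> transport_map P Q T \<and> (AE x in P. R x (T x) = 0)"
proof -
  define I where "I = (\<integral>x. \<phi> x \<partial>P) + (\<integral>y. \<psi> y \<partial>Q)"
  note split = transport_cost_split[OF sets_P _ cost \<phi> \<psi> P2 Q2, folded I_def]
  have cost_T\<^sub>0: "(\<integral>\<^sup>+x. ennreal ((norm (x - T\<^sub>0 x))\<^sup>2) \<partial>P) = ennreal I" and "0 \<le> I"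
    using split(2,3)[OF T\<^sub>0] by (simp_all add: slack_T\<^sub>0)
  have slack_integral_nonneg: "0 \<le> (\<integral>x. R x (S x) \<partial>P)" for S
    by (simp add: slack_nonneg)
  show ?thesis
  proof
    assume opt: "optimal_transport_map P Q T"
    then have T: "transport_map P Q T"
      by (simp add: optimal_transport_map_def)
    have "ennreal (I + (\<integral>x. R x (T x) \<partial>P)) \<le> ennreal I"
      using opt T\<^sub>0 unfolding optimal_transport_map_def split(2)[OF T, symmetric] cost_T\<^sub>0[symmetric]
      by blast
    then have "(\<integral>x. R x (T x) \<partial>P) = 0"
      using \<open>0 \<le> I\<close> slack_integral_nonneg[of T] by (simp add: ennreal_le_iff)
    then have "AE x in P. R x (T x) = 0"
      using integral_nonneg_eq_0_iff_AE[OF split(1)[OF T]] slack_nonneg by simp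
    with T show "transport_map P Q T \<and> (AE x in P. R x (T x) = 0)" ..
  next
    assume "transport_map P Q T \<and> (AE x in P. R x (T x) = 0)"
    then have T: "transport_map P Q T" and "AE x in P. R x (T x) = 0"
      by auto
    then have "(\<integral>\<^sup>+x. ennreal ((norm (x - T x))\<^sup>2) \<partial>P) = ennreal I"
      by (simp add: split(2)[OF T] integral_eq_zero_AE)
    also have "\<dots> \<le> (\<integral>\<^sup>+x. ennreal ((norm (x - S x))\<^sup>2) \<partial>P)" if "transport_map P Q S" for S
      using slack_integral_nonneg[of S] by (simp add: split(2)[OF that] ennreal_leI)
    finally show "optimal_transport_map P Q T"
      using T by (simp add: optimal_transport_map_def)
  qed
qed

text \<open>The first two summands are Kantorovich potentials for the scaling map
  \<open>x \<mapsto> m' + c *\<^sub>R (x - m)\<close>; the nonnegative remainder vanishes exactly on its graph.\<close>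

lemma norm_diff_square_eq_potentials:
  fixes x y m m' :: "'a::real_inner"
  assumes "c > 0"
  shows "(norm (x - y))\<^sup>2 =
      ((norm (m - m'))\<^sup>2 + 2 * ((m - m') \<bullet> (x - m)) + (1 - c) * (norm (x - m))\<^sup>2)
    + (- 2 * ((m - m') \<bullet> (y - m')) + (1 - 1 / c) * (norm (y - m'))\<^sup>2)
    + (norm (c *\<^sub>R (x - m) - (y - m')))\<^sup>2 / c"
proof -
  define d u v where "d = m - m'" and "u = x - m" and "v = y - m'"
  have xy: "x - y = d + u - v"
    by (simp add: d_def u_def v_def)
  have "(norm (x - y))\<^sup>2 = d \<bullet> d + u \<bullet> u + v \<bullet> v + 2 * (d \<bullet> u) - 2 * (d \<bullet> v) - 2 * (u \<bullet> v)"
    unfolding xy power2_norm_eq_inner by (simp add: inner_simps inner_commute algebra_simps)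
  moreover have "(norm (c *\<^sub>R u - v))\<^sup>2 = c\<^sup>2 * (u \<bullet> u) - 2 * c * (u \<bullet> v) + v \<bullet> v"
    unfolding power2_norm_eq_inner by (simp add: inner_simps inner_commute algebra_simps power2_eq_square)
  moreover have "(norm d)\<^sup>2 = d \<bullet> d" "(norm u)\<^sup>2 = u \<bullet> u" "(norm v)\<^sup>2 = v \<bullet> v"
    by (simp_all add: power2_norm_eq_inner)
  ultimately show ?thesis
    using assms unfolding d_def[symmetric] u_def[symmetric] v_def[symmetric]
    by (simp only:) (simp add: field_simps power2_eq_square)
qed

section \<open>Optimal transport between scaled Gaussians\<close>

lemma AE_lborel_continuous_eq:
  fixes f g :: "'a::euclidean_space \<Rightarrow> 'b::t2_space"
  assumes "continuous_on UNIV f" and "continuous_on UNIV g" and "AE x in lborel. f x = g x"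
  shows "f x = g x"
proof -
  define U where "U = {x. f x \<noteq> g x}"
  have "open U"
    unfolding U_def using assms(1,2) by (rule open_Collect_neq)
  then have "U \<in> sets lborel"
    by simp
  moreover have "emeasure lborel U = 0"
    using assms(3) \<open>U \<in> sets lborel\<close> by (simp add: AE_iff_measurable[OF _ refl] U_def)
  ultimately have "U \<in> null_sets lborel"
    by (simp add: null_sets_def)
  then have "negligible U"
    by (simp add: negligible_iff_null_sets null_sets_completionI)
  then have "U = {}"
    using open_not_negligible[OF \<open>open U\<close>] by blast
  then show ?thesis
    by (auto simp: U_def)
qed

lemma optimal_transport_map_mvn_iff_AE_scaling:
  fixes S :: "real^'n^'n"
  assumes det_S: "0 < det S" and coercive: "coercive_matrix (matrix_inv S)" and "c > 0"
  shows "optimal_transport_map (mvn m S) (mvn m' (c\<^sup>2 *\<^sub>R S)) T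
    \<longleftrightarrow> transport_map (mvn m S) (mvn m' (c\<^sup>2 *\<^sub>R S)) T \<and> (AE x in mvn m S. T x = m' + c *\<^sub>R (x - m))"
proof -
  define P Q where "P = mvn m S" and "Q = mvn m' (c\<^sup>2 *\<^sub>R S)"
  have "invertible S"
    using det_S by (simp add: invertible_det_nz)
  have P_moment: "(\<integral>\<^sup>+x. ennreal (1 + (norm x)\<^sup>2) \<partial>P) < \<infinity>"
    unfolding P_def using det_S coercive by (rule mvn_second_moment_finite)
  have "0 < det (c\<^sup>2 *\<^sub>R S)" and "coercive_matrix (matrix_inv (c\<^sup>2 *\<^sub>R S))"
    using nondegenerate_covariance_scaleR[OF det_S coercive] \<open>c > 0\<close> by simp_all
  then have Q_moment: "(\<integral>\<^sup>+y. ennreal (1 + (norm y)\<^sup>2) \<partial>Q) < \<infinity>"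
    unfolding Q_def by (rule mvn_second_moment_finite)
  define \<phi> where "\<phi> x = (norm (m - m'))\<^sup>2 + (2 *\<^sub>R (m - m')) \<bullet> (x - m) + (1 - c) * (norm (x - m))\<^sup>2" for x
  define \<psi> where "\<psi> y = (- 2 *\<^sub>R (m - m')) \<bullet> (y - m') + (1 - 1 / c) * (norm (y - m'))\<^sup>2" for y
  define R where "R x y = (norm (c *\<^sub>R (x - m) - (y - m')))\<^sup>2 / c" for x y :: "real^'n"
  have cost: "(norm (x - y))\<^sup>2 = \<phi> x + \<psi> y + R x y" for x y
    unfolding \<phi>_def \<psi>_def R_def using norm_diff_square_eq_potentials[OF \<open>c > 0\<close>, of x y m m']
    by simp
  have P2: "integrable P (\<lambda>x. (norm x)\<^sup>2)" and Q2: "integrable Q (\<lambda>y. (norm y)\<^sup>2)"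
    using integrable_quadratic[OF _ P_moment, of 0 0 0 1] integrable_quadratic[OF _ Q_moment, of 0 0 0 1]
    by (simp_all add: P_def Q_def)
  have \<phi>: "integrable P \<phi>"
    unfolding \<phi>_def by (rule integrable_quadratic[OF _ P_moment]) (simp add: P_def)
  have \<psi>: "integrable Q \<psi>"
    unfolding \<psi>_def using integrable_quadratic[OF _ Q_moment, of 0 "- 2 *\<^sub>R (m - m')" m' "1 - 1 / c"]
    by (simp add: Q_def)
  note T\<^sub>0 = transport_map_mvn_scaling[OF \<open>invertible S\<close> \<open>c > 0\<close>, of m m', folded P_def Q_def]
  have "optimal_transport_map P Q T \<longleftrightarrow> transport_map P Q T \<and> (AE x in P. R x (T x) = 0)"
    by (rule optimal_transport_map_iff_AE_slack_zero[OF _ T\<^sub>0 _ cost _ \<phi> \<psi> P2 Q2])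
      (use \<open>c > 0\<close> in \<open>simp_all add: P_def R_def\<close>)
  moreover have "R x y = 0 \<longleftrightarrow> y = m' + c *\<^sub>R (x - m)" for x y
    using \<open>c > 0\<close> by (auto simp: R_def)
  ultimately show ?thesis
    unfolding P_def Q_def by simp
qed

theorem optimal_transport_map_mvn_affine_iff:
  fixes S W :: "real^'n^'n"
  assumes det_S: "0 < det S" and "coercive_matrix (matrix_inv S)" and "c > 0"
  shows "optimal_transport_map (mvn m S) (mvn m' (c\<^sup>2 *\<^sub>R S)) (\<lambda>x. m' + W *v (x - m))
    \<longleftrightarrow> W = c *\<^sub>R mat 1"
proof
  assume "optimal_transport_map (mvn m S) (mvn m' (c\<^sup>2 *\<^sub>R S)) (\<lambda>x. m' + W *v (x - m))"
  then have "AE x in mvn m S. W *v (x - m) = c *\<^sub>R (x - m)"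
    by (simp add: optimal_transport_map_mvn_iff_AE_scaling[OF assms])
  then have "AE x in lborel. 0 < ennreal (mvn_density m S x) \<longrightarrow> W *v (x - m) = c *\<^sub>R (x - m)"
    unfolding mvn_def by (subst (asm) AE_density) auto
  then have "AE x in lborel. W *v (x - m) = c *\<^sub>R (x - m)"
    using mvn_density_pos[OF det_S] by simp
  then have "W *v (x - m) = c *\<^sub>R (x - m)" for x
    by (rule AE_lborel_continuous_eq[rotated 2])
      (auto simp: matrix_vector_mult_diff_distrib intro!: continuous_intros)
  from this[of "_ + m"] show "W = c *\<^sub>R mat 1"
    by (simp add: matrix_eq flip: scaleR_matrix_vector_assoc add: matrix_vector_mul_lid)
next
  assume "W = c *\<^sub>R mat 1"
  then have "(\<lambda>x. m' + W *v (x - m)) = (\<lambda>x. m' + c *\<^sub>R (x - m))"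
    by (simp add: matrix_vector_mul_lid flip: scaleR_matrix_vector_assoc)
  moreover have "invertible S"
    using det_S by (simp add: invertible_det_nz)
  ultimately show "optimal_transport_map (mvn m S) (mvn m' (c\<^sup>2 *\<^sub>R S)) (\<lambda>x. m' + W *v (x - m))"
    using \<open>c > 0\<close> by (simp add: optimal_transport_map_mvn_iff_AE_scaling[OF assms] transport_map_mvn_scaling)
qed

theorem mainTheorem7:
  fixes A D :: "real^'n^'n" and mu :: "nat \<Rightarrow> real^'n" and sigma :: "nat \<Rightarrow> real"
    and s :: nat and W :: "real^'n^'n"
  assumes inv: "invertible (mat 1 - A)"
    and sig0: "sigma 0 > 0" and sig1: "sigma 1 > 0"
    and Ddiag: "\<forall>i j. i \<noteq> j \<longrightarrow> D $ i $ j = 0"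
    and Dpos: "\<forall>i. D $ i $ i > 0"
    and s01: "s \<in> {0, 1}"
  shows "let B = matrix_inv (mat 1 - A); s' = 1 - s;
             T = (\<lambda>x. B *v mu s' + W *v (x - B *v mu s))
         in (optimal_transport_map (scm_law B D (mu s) (sigma s)) (scm_law B D (mu s') (sigma s')) T
               \<longleftrightarrow> W = (sigma s' / sigma s) *\<^sub>R mat 1)
          \<and> (optimal_transport_map (scm_law B D (mu s) (sigma s)) (scm_law B D (mu s') (sigma s')) T
               \<longrightarrow> (\<forall>x. T x = cf_map B (mu s) (sigma s) (mu s') (sigma s') x))"
proof -
  define B where "B = matrix_inv (mat 1 - A)"
  define s' where "s' = 1 - s"
  define S where "S = (sigma s)\<^sup>2 *\<^sub>R (B ** D ** transpose B)"
  have "sigma s > 0" and "sigma s' > 0"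
    using s01 sig0 sig1 by (auto simp: s'_def)
  have "invertible B"
    unfolding B_def using inv by (rule invertible_matrix_inv)
  then have "0 < det S" and "coercive_matrix (matrix_inv S)"
    unfolding S_def using nondegenerate_congruence_diagonal[OF _ Ddiag Dpos] \<open>sigma s > 0\<close>
    by (simp_all add: nondegenerate_covariance_scaleR)
  have laws: "scm_law B D (mu s) (sigma s) = mvn (B *v mu s) S"
    "scm_law B D (mu s') (sigma s') = mvn (B *v mu s') ((sigma s' / sigma s)\<^sup>2 *\<^sub>R S)"
    using \<open>sigma s > 0\<close> by (simp_all add: scm_law_def S_def power_divide)
  have optimal_iff: "optimal_transport_map (scm_law B D (mu s) (sigma s)) (scm_law B D (mu s') (sigma s'))
      (\<lambda>x. B *v mu s' + W *v (x - B *v mu s)) \<longleftrightarrow> W = (sigma s' / sigma s) *\<^sub>R mat 1"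
    unfolding laws using \<open>0 < det S\<close> \<open>coercive_matrix (matrix_inv S)\<close> \<open>sigma s > 0\<close> \<open>sigma s' > 0\<close>
    by (intro optimal_transport_map_mvn_affine_iff) auto
  have "B *v mu s' + W *v (x - B *v mu s) = cf_map B (mu s) (sigma s) (mu s') (sigma s') x"
    if "W = (sigma s' / sigma s) *\<^sub>R mat 1" for x
    using that by (simp add: cf_map_def matrix_vector_mul_lid flip: scaleR_matrix_vector_assoc)
  with optimal_iff show ?thesis
    unfolding Let_def B_def[symmetric] s'_def[symmetric] by blast
qed

end
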